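(* Let $S_1,S_2$ be strips and let $h:\partial S_1\to\partial S_2$ be a homeomorphism which is monotone (i.e. either preserves or reverses the partial order on the boundaries described in the context). Then $h$ extends to a foliated homeomorphism $\hat h:S_1\to S_2$ (with respect to the canonical foliations), i.e. $\hat h|_{\partial S_1}=h$.
   Context: A subset $S\subset\mathbb{R}^2$ is a strip if for some real numbers $u<v$ one has $\mathbb{R}\times(u,v)\subset S\subset\mathbb{R}\times[u,v]$ and $S$ is open in $\mathbb{R}\times[u,v]$. Put $\partial_-S=S\cap(\mathbb{R}\times\{u\})$, $\partial_+S=S\cap(\mathbb{R}\times\{v\})$, $\partial S=\partial_-S\cup\partial_+S$ (a disjoint union of open horizontal intervals, the boundary intervals). The canonical foliation of $S$ consists of the lines $\mathbb{R}\times\{t\}$, $t\in(u,v)$, and the boundary intervals. Partial order on $\partial S$: for $(a,x),(b,y)\in\partial S$, $(a,x)<(b,y)$ iff $a<b$ and $x=y$ (so $\partial_-S$ and $\partial_+S$ are each linearly ordered and mutually incomparable). For strips $S_1,S_2$, subsets $A\subset\partial S_1$, $B\subset\partial S_2$, a bijection $h:A\to B$ preserves order if for all $a,a'\in A$: $a<a'\iff h(a)<h(a')$; it reverses order if $a<a'\iff h(a)>h(a')$; it is monotone if it preserves or reverses order. A foliated homeomorphism maps leaves onto leaves. *)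

theory Defs
  imports "HOL-Analysis.Analysis"
begin

definition is_strip :: "(real \<times> real) set \<Rightarrow> bool" where
  "is_strip S \<longleftrightarrow> (\<exists>u v. u < v \<and> UNIV \<times> {u<..<v} \<subseteq> S \<and> S \<subseteq> UNIV \<times> {u..v}
      \<and> openin (top_of_set (UNIV \<times> {u..v})) S)"

text \<open>For a strip, the numbers u and v are determined by S.\<close>
definition strip_lo :: "(real \<times> real) set \<Rightarrow> real" where
  "strip_lo S = Inf (snd ` S)"

definition strip_hi :: "(real \<times> real) set \<Rightarrow> real" where
  "strip_hi S = Sup (snd ` S)"

definition bd_minus :: "(real \<times> real) set \<Rightarrow> (real \<times> real) set" where
  "bd_minus S = S \<inter> (UNIV \<times> {strip_lo S})"

definition bd_plus :: "(real \<times> real) set \<Rightarrow> (real \<times> real) set" where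
  "bd_plus S = S \<inter> (UNIV \<times> {strip_hi S})"

definition strip_bd :: "(real \<times> real) set \<Rightarrow> (real \<times> real) set" where
  "strip_bd S = bd_minus S \<union> bd_plus S"

definition canonical_leaves :: "(real \<times> real) set \<Rightarrow> (real \<times> real) set set" where
  "canonical_leaves S =
     {UNIV \<times> {t} | t. strip_lo S < t \<and> t < strip_hi S} \<union> components (strip_bd S)"

definition bd_less :: "real \<times> real \<Rightarrow> real \<times> real \<Rightarrow> bool" where
  "bd_less p q \<longleftrightarrow> fst p < fst q \<and> snd p = snd q"

definition preserves_order :: "(real \<times> real) set \<Rightarrow> (real \<times> real \<Rightarrow> real \<times> real) \<Rightarrow> bool" where
  "preserves_order A h \<longleftrightarrow> (\<forall>a\<in>A. \<forall>a'\<in>A. bd_less a a' \<longleftrightarrow> bd_less (h a) (h a'))"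

definition reverses_order :: "(real \<times> real) set \<Rightarrow> (real \<times> real \<Rightarrow> real \<times> real) \<Rightarrow> bool" where
  "reverses_order A h \<longleftrightarrow> (\<forall>a\<in>A. \<forall>a'\<in>A. bd_less a a' \<longleftrightarrow> bd_less (h a') (h a))"

definition monotone_bd :: "(real \<times> real) set \<Rightarrow> (real \<times> real \<Rightarrow> real \<times> real) \<Rightarrow> bool" where
  "monotone_bd A h \<longleftrightarrow> preserves_order A h \<or> reverses_order A h"

definition foliated :: "(real \<times> real) set \<Rightarrow> (real \<times> real) set \<Rightarrow> (real \<times> real \<Rightarrow> real \<times> real) \<Rightarrow> bool" where
  "foliated S1 S2 f \<longleftrightarrow> (\<forall>L\<in>canonical_leaves S1. f ` L \<in> canonical_leaves S2)"

end

theory Submission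
  imports Defs
begin

text \<open>On each boundary line of \<open>S1\<close> the boundary map is encoded by the strictly increasing
  function \<open>\<gamma> a = \<sigma> * fst (h (a, y))\<close>, the sign \<open>\<sigma>\<close> undoing an order reversal. Both strips
  are parametrised by one domain of pairs \<open>(p, s)\<close>, \<open>s\<close> being the relative height: the first
  coordinate is \<open>X p s\<close> in \<open>S1\<close> and \<open>\<sigma> * (p - X p s)\<close> in \<open>S2\<close>, where \<open>X\<close> blends the two
  monotone arcs \<open>p \<mapsto> (A p, p - A p)\<close> running through the graphs of \<open>\<gamma>\<close> on the lower and upper
  boundary. At every interior height both \<open>X\<close> and \<open>p - X\<close> are increasing homeomorphisms of the
  line, and on the boundary the parameter \<open>a + \<gamma> a\<close> is sent to \<open>(a, y)\<close> and to \<open>h (a, y)\<close>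
  respectively. Composing the second parametrisation with the inverse of the first therefore gives
  a homeomorphism \<open>S1 \<rightarrow> S2\<close> that maps horizontal lines to horizontal lines and extends \<open>h\<close>.\<close>

section \<open>Monotone arcs through graphs\<close>

text \<open>For strictly increasing \<open>\<gamma>\<close>, the point \<open>(graph_arc U \<gamma> p, p - graph_arc U \<gamma> p)\<close> is where
  the anti-diagonal \<open>x + y = p\<close> meets the graph of \<open>\<gamma>\<close>, completed to a monotone curve by
  horizontal and vertical segments across the gaps of \<open>U\<close>; for \<open>U = {}\<close> it is the diagonal.\<close>

definition graph_arc :: "real set \<Rightarrow> (real \<Rightarrow> real) \<Rightarrow> real \<Rightarrow> real" where
  "graph_arc U \<gamma> p = (if U = {} then p / 2 else (SUP z\<in>U. min z (p - \<gamma> z)))"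

lemma graph_arc_terms_bounded:
  fixes \<gamma> :: "real \<Rightarrow> real"
  assumes "strict_mono_on U \<gamma>" "z \<in> U" "w \<in> U"
  shows "min w (p - \<gamma> w) \<le> max z (p - \<gamma> z)"
proof (cases "w \<le> z")
  case False
  then have "\<gamma> z < \<gamma> w" using assms by (meson not_le strict_mono_onD)
  then show ?thesis by (simp add: min_le_iff_disj le_max_iff_disj)
qed (simp add: min_le_iff_disj le_max_iff_disj)

lemma graph_arc_ge:
  assumes "strict_mono_on U \<gamma>" "z \<in> U"
  shows "min z (p - \<gamma> z) \<le> graph_arc U \<gamma> p"
proof -
  have "bdd_above ((\<lambda>w. min w (p - \<gamma> w)) ` U)"
    using graph_arc_terms_bounded[OF assms] by (auto intro!: bdd_aboveI2)
  then show ?thesis using assms unfolding graph_arc_def by (auto intro: cSUP_upper)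
qed

lemma graph_arc_le:
  assumes "strict_mono_on U \<gamma>" "z \<in> U"
  shows "graph_arc U \<gamma> p \<le> max z (p - \<gamma> z)"
  using assms graph_arc_terms_bounded[OF assms] unfolding graph_arc_def by (auto intro!: cSUP_least)

lemma graph_arc_at:
  assumes "strict_mono_on U \<gamma>" "a \<in> U"
  shows "graph_arc U \<gamma> (a + \<gamma> a) = a"
  using graph_arc_ge[OF assms, of "a + \<gamma> a"] graph_arc_le[OF assms, of "a + \<gamma> a"] by simp

lemma mono_graph_arc:
  assumes "strict_mono_on U \<gamma>"
  shows "mono (graph_arc U \<gamma>)"
proof
  fix p q :: real assume pq: "p \<le> q"
  show "graph_arc U \<gamma> p \<le> graph_arc U \<gamma> q"
  proof (cases "U = {}")
    case False
    have "min z (p - \<gamma> z) \<le> graph_arc U \<gamma> q" if "z \<in> U" for z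
      using graph_arc_ge[OF assms that, of q] pq by linarith
    then show ?thesis using False unfolding graph_arc_def[of U \<gamma> p] by (auto intro!: cSUP_least)
  qed (use pq in \<open>simp add: graph_arc_def\<close>)
qed

lemma mono_graph_arc_compl:
  assumes "strict_mono_on U \<gamma>"
  shows "mono (\<lambda>p. p - graph_arc U \<gamma> p)"
proof
  fix p q :: real assume pq: "p \<le> q"
  have "graph_arc U \<gamma> q \<le> graph_arc U \<gamma> p + (q - p)"
  proof (cases "U = {}")
    case False
    have "min z (q - \<gamma> z) \<le> graph_arc U \<gamma> p + (q - p)" if "z \<in> U" for z
      using graph_arc_ge[OF assms that, of p] pq by linarith
    then show ?thesis using False unfolding graph_arc_def[of U \<gamma> q] by (auto intro!: cSUP_least)
  qed (use pq in \<open>simp add: graph_arc_def\<close>)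
  then show "p - graph_arc U \<gamma> p \<le> q - graph_arc U \<gamma> q" by linarith
qed

lemma graph_arc_eq_imp:
  assumes mono: "strict_mono_on U \<gamma>" and "open U" "continuous_on U \<gamma>" "a \<in> U"
    and arc: "graph_arc U \<gamma> p = a"
  shows "p = a + \<gamma> a"
proof (rule ccontr)
  assume ne: "p \<noteq> a + \<gamma> a"
  obtain d where d: "d > 0" "\<forall>z\<in>U. dist z a < d \<longrightarrow> dist (\<gamma> z) (\<gamma> a) < \<bar>p - (a + \<gamma> a)\<bar>"
    using assms ne unfolding continuous_on_iff by (metis zero_less_abs_iff right_minus_eq)
  obtain e where e: "e > 0" "ball a e \<subseteq> U" using \<open>open U\<close> \<open>a \<in> U\<close> open_contains_ball by blast
  define r where "r = min d e / 2"
  have "r > 0" "r < d" "r < e" using d e by (auto simp: r_def min_less_iff_disj)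
  then have r: "r > 0" "a + r \<in> U" "a - r \<in> U" "\<bar>\<gamma> (a + r) - \<gamma> a\<bar> < \<bar>p - (a + \<gamma> a)\<bar>"
    "\<bar>\<gamma> (a - r) - \<gamma> a\<bar> < \<bar>p - (a + \<gamma> a)\<bar>"
    using d(2) e(2) by (auto simp: dist_real_def subset_iff)
  have "min (a + r) (p - \<gamma> (a + r)) \<le> a" using graph_arc_ge[OF mono r(2), of p] arc by simp
  then have "p \<le> a + \<gamma> (a + r)" using r(1) by (simp add: min_le_iff_disj)
  have "a \<le> max (a - r) (p - \<gamma> (a - r))" using graph_arc_le[OF mono r(3), of p] arc by simp
  then have "a + \<gamma> (a - r) \<le> p" using r(1) by (simp add: le_max_iff_disj)
  show False using r(4,5) \<open>p \<le> a + \<gamma> (a + r)\<close> \<open>a + \<gamma> (a - r) \<le> p\<close>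
    by (simp add: abs_if split: if_splits)
qed

lemma graph_arc_compl_eq_imp:
  assumes mono: "strict_mono_on U \<gamma>" and "open U" "a \<in> U"
    and arc: "p - graph_arc U \<gamma> p = \<gamma> a"
  shows "p = a + \<gamma> a"
proof (rule ccontr)
  assume ne: "p \<noteq> a + \<gamma> a"
  obtain e where e: "e > 0" "ball a e \<subseteq> U" using \<open>open U\<close> \<open>a \<in> U\<close> open_contains_ball by blast
  define r where "r = min \<bar>p - (a + \<gamma> a)\<bar> e / 2"
  have r: "r > 0" "r < \<bar>p - (a + \<gamma> a)\<bar>" "a + r \<in> U" "a - r \<in> U"
  proof -
    have "r > 0" "r < \<bar>p - (a + \<gamma> a)\<bar>" "r < e" using ne e by (auto simp: r_def min_less_iff_disj)
    then show "r > 0" "r < \<bar>p - (a + \<gamma> a)\<bar>" "a + r \<in> U" "a - r \<in> U"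
      using e by (auto simp: dist_real_def subset_iff)
  qed
  have "\<gamma> (a - r) < \<gamma> a" "\<gamma> a < \<gamma> (a + r)"
    using r \<open>a \<in> U\<close> by (auto intro!: strict_mono_onD[OF mono])
  moreover have "min (a - r) (p - \<gamma> (a - r)) \<le> p - \<gamma> a"
    using graph_arc_ge[OF mono r(4), of p] arc by simp
  moreover have "p - \<gamma> a \<le> max (a + r) (p - \<gamma> (a + r))"
    using graph_arc_le[OF mono r(3), of p] arc by simp
  ultimately have "\<bar>p - (a + \<gamma> a)\<bar> \<le> r" by (simp add: min_le_iff_disj le_max_iff_disj abs_le_iff)
  then show False using r(2) by simp
qed

section \<open>Interpolating between two arcs\<close>

text \<open>The term \<open>s * (1 - s) * p\<close> makes every intermediate height strictly expanding in \<open>p\<close>, and as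
  the weights sum to \<open>1\<close> the same holds for \<open>p - blend A B p s\<close>.\<close>

definition blend :: "(real \<Rightarrow> real) \<Rightarrow> (real \<Rightarrow> real) \<Rightarrow> real \<Rightarrow> real \<Rightarrow> real" where
  "blend A B p s = (1 - s)\<^sup>2 * A p + s\<^sup>2 * B p + s * (1 - s) * p"

lemma blend_0 [simp]: "blend A B p 0 = A p" and blend_1 [simp]: "blend A B p 1 = B p"
  by (simp_all add: blend_def)

lemma blend_compl: "p - blend A B p s = blend (\<lambda>p. p - A p) (\<lambda>p. p - B p) p s"
  by (simp add: blend_def algebra_simps power2_eq_square)

lemma blend_growth:
  assumes "mono A" "mono B" "0 \<le> s" "s \<le> 1" "p \<le> q"
  shows "s * (1 - s) * (q - p) \<le> blend A B q s - blend A B p s"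
proof -
  have "A p \<le> A q" "B p \<le> B q" using assms(1,2,5) by (simp_all add: monoD)
  then have "0 \<le> (1 - s)\<^sup>2 * (A q - A p)" "0 \<le> s\<^sup>2 * (B q - B p)" by simp_all
  then show ?thesis unfolding blend_def by (simp add: algebra_simps)
qed

lemma mono_blend:
  assumes "mono A" "mono B" "0 \<le> s" "s \<le> 1"
  shows "mono (\<lambda>p. blend A B p s)"
proof
  fix p q :: real assume "p \<le> q"
  then have "0 \<le> s * (1 - s) * (q - p)" using assms by simp
  then show "blend A B p s \<le> blend A B q s" using blend_growth[OF assms \<open>p \<le> q\<close>] by linarith
qed

lemma continuous_on_if_mono_compl:
  fixes A :: "real \<Rightarrow> real"
  assumes "mono A" "mono (\<lambda>p. p - A p)"
  shows "continuous_on UNIV A"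
proof -
  have "\<bar>A q - A p\<bar> \<le> \<bar>q - p\<bar>" for p q
  proof (cases "p \<le> q")
    case True
    then show ?thesis using monoD[OF assms(1) True] monoD[OF assms(2) True] by simp
  next
    case False
    then have qp: "q \<le> p" by simp
    show ?thesis using monoD[OF assms(1) qp] monoD[OF assms(2) qp] qp by simp
  qed
  then show ?thesis unfolding continuous_on_iff dist_real_def by (metis le_less_trans)
qed

lemma continuous_on_blend:
  assumes "continuous_on UNIV A" "continuous_on UNIV B"
  shows "continuous_on UNIV (\<lambda>z. blend A B (fst z) (snd z))"
  unfolding blend_def
  by (intro continuous_intros continuous_on_compose2[OF assms(1)]
      continuous_on_compose2[OF assms(2)])
    auto

lemma ex1_preimage_if_expanding:
  fixes f :: "real \<Rightarrow> real"
  assumes cont: "continuous_on UNIV f" and "c > 0"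
    and expand: "\<And>p q. p \<le> q \<Longrightarrow> c * (q - p) \<le> f q - f p"
  shows "\<exists>!p. f p = y"
proof -
  define m where "m = \<bar>y - f 0\<bar> / c"
  have m: "m \<ge> 0" "c * m = \<bar>y - f 0\<bar>" using \<open>c > 0\<close> by (auto simp: m_def)
  have "f (- m) \<le> y" "y \<le> f m" using expand[of "-m" 0] expand[of 0 m] m by auto
  then obtain p where "f p = y"
    using IVT'[of f "-m" y m] m continuous_on_subset[OF cont subset_UNIV] by auto
  moreover have "strict_mono f"
  proof
    fix p q :: real assume "p < q"
    then show "f p < f q" using expand[of p q] mult_pos_pos[OF \<open>c > 0\<close>, of "q - p"] by simp
  qed
  then have "inj f" by (rule strict_mono_imp_inj_on)
  ultimately show ?thesis by (auto dest: injD)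
qed

section \<open>Homeomorphisms that preserve heights\<close>

lemma continuous_on_implicit_inverse:
  fixes f :: "real \<Rightarrow> real \<Rightarrow> real"
  assumes cont: "\<And>p. continuous_on UNIV (f p)"
    and mono: "\<And>s. s \<in> snd ` E \<Longrightarrow> mono (\<lambda>p. f p s)"
    and ex1: "\<And>a s. (a, s) \<in> E \<Longrightarrow> \<exists>!p. f p s = a"
  shows "continuous_on E (\<lambda>z. THE p. f p (snd z) = fst z)" (is "continuous_on E ?g")
  unfolding continuous_on_def
proof (intro ballI tendstoI)
  fix z0 and e :: real assume z0: "z0 \<in> E" and "e > 0"
  have g: "f (?g z) (snd z) = fst z" if "z \<in> E" for z
    using theI'[OF ex1] that by (metis prod.collapse)
  have mono_at: "f p (snd z) \<le> f q (snd z)" if "z \<in> E" "p \<le> q" for z p q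
    using monoD[OF mono that(2)] that(1) by auto
  have g_less: "?g z < p" if "z \<in> E" "fst z < f p (snd z)" for z p
    using mono_at[OF that(1), of p "?g z"] g[OF that(1)] that(2) by force
  have g_greater: "p < ?g z" if "z \<in> E" "f p (snd z) < fst z" for z p
    using mono_at[OF that(1), of "?g z" p] g[OF that(1)] that(2) by force
  have uniq: "p = ?g z0" if "f p (snd z0) = fst z0" for p
    using ex1[of "fst z0" "snd z0"] g[OF z0] that z0 by auto
  have "fst z0 \<le> f (?g z0 + e) (snd z0)" "f (?g z0 - e) (snd z0) \<le> fst z0"
    using mono_at[OF z0, of "?g z0" "?g z0 + e"] mono_at[OF z0, of "?g z0 - e" "?g z0"]
      g[OF z0] \<open>e > 0\<close>
    by auto
  moreover have "fst z0 \<noteq> f (?g z0 + e) (snd z0)" "f (?g z0 - e) (snd z0) \<noteq> fst z0"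
    using uniq[of "?g z0 + e"] uniq[of "?g z0 - e"] \<open>e > 0\<close> by auto
  ultimately have "0 < f (?g z0 + e) (snd z0) - fst z0" "f (?g z0 - e) (snd z0) - fst z0 < 0"
    by auto
  moreover have lim: "((\<lambda>z. f p (snd z) - fst z) \<longlongrightarrow> f p (snd z0) - fst z0) (at z0 within E)" for p
    using cont[of p] by (intro tendsto_intros isCont_tendsto_compose[where g = "f p"])
      (auto simp: continuous_on_eq_continuous_at)
  ultimately have "\<forall>\<^sub>F z in at z0 within E. 0 < f (?g z0 + e) (snd z) - fst z"
    "\<forall>\<^sub>F z in at z0 within E. f (?g z0 - e) (snd z) - fst z < 0"
    using order_tendstoD(1)[OF lim] order_tendstoD(2)[OF lim] by blast+
  moreover have "\<forall>\<^sub>F z in at z0 within E. z \<in> E" by (simp add: eventually_at_filter)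
  ultimately show "\<forall>\<^sub>F z in at z0 within E. dist (?g z) (?g z0) < e"
  proof eventually_elim
    case (elim z)
    then have "?g z < ?g z0 + e" "?g z0 - e < ?g z" by (auto intro: g_less g_greater)
    then show ?case by (simp add: dist_real_def abs_less_iff)
  qed
qed

lemma homeomorphism_shear:
  fixes f :: "real \<Rightarrow> real \<Rightarrow> real" and D :: "(real \<times> real) set"
  assumes cont: "continuous_on UNIV (\<lambda>z. f (fst z) (snd z))"
    and mono: "\<And>s. s \<in> snd ` D \<Longrightarrow> mono (\<lambda>p. f p s)"
    and inj: "\<And>p s q. (p, s) \<in> D \<Longrightarrow> f q s = f p s \<Longrightarrow> q = p"
  shows "homeomorphism D ((\<lambda>z. (f (fst z) (snd z), snd z)) ` D)
    (\<lambda>z. (f (fst z) (snd z), snd z)) (\<lambda>w. (THE p. f p (snd w) = fst w, snd w))"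
proof (rule homeomorphismI)
  let ?E = "(\<lambda>z. (f (fst z) (snd z), snd z)) ` D"
  have the_eq: "(THE q. f q s = f p s) = p" if "(p, s) \<in> D" for p s
    using inj[OF that] by blast
  have "continuous_on UNIV (f p)" for p
    using continuous_on_compose2[OF cont, where f = "\<lambda>s. (p, s)" and s = UNIV]
    by (simp add: continuous_on_Pair continuous_on_const continuous_on_id)
  moreover have "snd ` ?E = snd ` D" by (simp add: image_image)
  moreover have "\<exists>!p. f p s = a" if "(a, s) \<in> ?E" for a s
  proof -
    obtain p where "(p, s) \<in> D" "a = f p s" using \<open>(a, s) \<in> ?E\<close> by force
    then show ?thesis using inj by blast
  qed
  ultimately have "continuous_on ?E (\<lambda>w. THE p. f p (snd w) = fst w)"
    using mono by (intro continuous_on_implicit_inverse) auto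
  then show "continuous_on ?E (\<lambda>w. (THE p. f p (snd w) = fst w, snd w))"
    by (intro continuous_intros)
  show "(\<lambda>w. (THE p. f p (snd w) = fst w, snd w)) ` ?E \<subseteq> D"
    by (auto simp: the_eq)
  show "(\<lambda>w. (THE p. f p (snd w) = fst w, snd w)) (f (fst z) (snd z), snd z) = z" if "z \<in> D" for z
    using the_eq[of "fst z" "snd z"] that by simp
  show "continuous_on D (\<lambda>z. (f (fst z) (snd z), snd z))"
    by (intro continuous_on_Pair continuous_on_subset[OF cont] continuous_intros) auto
  show "(\<lambda>z. (f (fst z) (snd z), snd z)) ((\<lambda>w. (THE p. f p (snd w) = fst w, snd w)) w) = w"
    if "w \<in> ?E" for w
    using that the_eq by auto
qed auto

lemma homeomorphism_fibrewise:
  fixes f :: "real \<Rightarrow> real \<Rightarrow> real" and D :: "(real \<times> real) set"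
  assumes "c \<noteq> 0" "d \<noteq> 0"
    and "continuous_on UNIV (\<lambda>z. f (fst z) (snd z))"
    and "\<And>s. s \<in> snd ` D \<Longrightarrow> mono (\<lambda>p. f p s)"
    and "\<And>p s q. (p, s) \<in> D \<Longrightarrow> f q s = f p s \<Longrightarrow> q = p"
  obtains g where "homeomorphism D ((\<lambda>z. (c * f (fst z) (snd z), e + d * snd z)) ` D)
    (\<lambda>z. (c * f (fst z) (snd z), e + d * snd z)) g"
proof -
  let ?shear = "\<lambda>z. (f (fst z) (snd z), snd z)"
  let ?affine = "\<lambda>z::real \<times> real. (c * fst z, e + d * snd z)"
  have "homeomorphism UNIV UNIV ?affine (\<lambda>w. (fst w / c, (snd w - e) / d))"
    using assms(1,2) by (intro homeomorphismI) (auto intro!: continuous_intros image_eqI)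
  then have "homeomorphism (?shear ` D) (?affine ` ?shear ` D) ?affine
      (\<lambda>w. (fst w / c, (snd w - e) / d))"
    by (rule homeomorphism_of_subsets) auto
  with homeomorphism_shear[OF assms(3-5)]
  have "homeomorphism D (?affine ` ?shear ` D) (?affine \<circ> ?shear)
      ((\<lambda>w. (THE p. f p (snd w) = fst w, snd w)) \<circ> (\<lambda>w. (fst w / c, (snd w - e) / d)))"
    by (rule homeomorphism_compose)
  then show ?thesis by (intro that) (simp add: image_image comp_def)
qed

section \<open>Strips and their foliations\<close>

lemma strip_bd_eq: "strip_bd S = {p \<in> S. snd p = strip_lo S \<or> snd p = strip_hi S}"
  unfolding strip_bd_def bd_minus_def bd_plus_def by (auto simp: mem_Times_iff)

lemma strip_lo_hi_eq:
  assumes "u < v" "UNIV \<times> {u<..<v} \<subseteq> S" "S \<subseteq> UNIV \<times> {u..v}"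
  shows "strip_lo S = u" "strip_hi S = v"
proof -
  have sub: "{u<..<v} \<subseteq> snd ` S" "snd ` S \<subseteq> {u..v}"
    using assms(2,3) by (force simp: image_iff)+
  have ne: "{u<..<v} \<noteq> {}" using assms(1) by simp
  have "bdd_below (snd ` S)" "bdd_above (snd ` S)"
    using bdd_below_mono[OF bdd_below_Icc sub(2)] bdd_above_mono[OF bdd_above_Icc sub(2)] .
  then have "Inf (snd ` S) \<le> Inf {u<..<v}" "Sup {u<..<v} \<le> Sup (snd ` S)"
    using cInf_superset_mono[OF ne _ sub(1)] cSup_subset_mono[OF ne _ sub(1)] by blast+
  moreover have "u \<le> Inf (snd ` S)" "Sup (snd ` S) \<le> v"
    using sub ne by (auto intro!: cInf_greatest cSup_least)
  ultimately show "strip_lo S = u" "strip_hi S = v"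
    using assms(1) unfolding strip_lo_def strip_hi_def by simp_all
qed

lemma is_strip_bounds:
  assumes "is_strip S"
  shows "strip_lo S < strip_hi S" "UNIV \<times> {strip_lo S<..<strip_hi S} \<subseteq> S"
    "S \<subseteq> UNIV \<times> {strip_lo S..strip_hi S}"
  using assms strip_lo_hi_eq unfolding is_strip_def by metis+

lemma open_strip_slice:
  assumes "is_strip S" "y = strip_lo S \<or> y = strip_hi S"
  shows "open {a. (a, y) \<in> S}"
proof -
  obtain u v T where uv: "u < v" "UNIV \<times> {u<..<v} \<subseteq> S" "S \<subseteq> UNIV \<times> {u..v}"
    and T: "open T" "S = T \<inter> (UNIV \<times> {u..v})"
    using assms(1) unfolding is_strip_def openin_open by blast
  then have "y \<in> {u..v}" using assms(2) strip_lo_hi_eq[OF uv] by auto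
  then have "{a. (a, y) \<in> S} = (\<lambda>a. (a, y)) -` T" using T(2) by auto
  moreover have "continuous_on UNIV (\<lambda>a::real. (a, y))" by (intro continuous_intros)
  ultimately show ?thesis using open_vimage[OF T(1)] by simp
qed

lemma homeomorphism_image_components:
  assumes "homeomorphism S T f g" "C \<in> components S"
  shows "f ` C \<in> components T"
proof -
  obtain x where "x \<in> S" "C = connected_component_set S x"
    using assms(2) by (auto simp: components_iff)
  then show ?thesis
    using connected_component_set_homeomorphism[OF assms(1)] assms(1)
    by (auto simp: components_iff homeomorphism_def)
qed

lemma foliated_if_lines_to_lines:
  assumes "homeomorphism (strip_bd S1) (strip_bd S2) h h'" "\<forall>p\<in>strip_bd S1. f p = h p"
    and lines: "\<And>t. strip_lo S1 < t \<Longrightarrow> t < strip_hi S1 \<Longrightarrow>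
      \<exists>t'. strip_lo S2 < t' \<and> t' < strip_hi S2 \<and> f ` (UNIV \<times> {t}) = UNIV \<times> {t'}"
  shows "foliated S1 S2 f"
  unfolding foliated_def
proof
  fix L assume "L \<in> canonical_leaves S1"
  then consider t where "L = UNIV \<times> {t}" "strip_lo S1 < t" "t < strip_hi S1"
    | "L \<in> components (strip_bd S1)"
    unfolding canonical_leaves_def by blast
  then show "f ` L \<in> canonical_leaves S2"
  proof cases
    case 1
    then show ?thesis using lines unfolding canonical_leaves_def by blast
  next
    case 2
    then have "f ` L = h ` L" using assms(2) in_components_subset by (metis image_cong subsetD)
    then show ?thesis
      using homeomorphism_image_components[OF assms(1) 2] unfolding canonical_leaves_def by simp
  qed
qed

lemma homeomorphism_image_level:
  assumes "homeomorphism S T f g" "\<And>z. z \<in> S \<Longrightarrow> snd (f z) = l (snd z)" "inj l"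
  shows "f ` {z \<in> S. snd z = t} = {w \<in> T. snd w = l t}"
proof
  show "f ` {z \<in> S. snd z = t} \<subseteq> {w \<in> T. snd w = l t}"
    using assms(1,2) by (auto simp: homeomorphism_def)
  show "{w \<in> T. snd w = l t} \<subseteq> f ` {z \<in> S. snd z = t}"
  proof clarify
    fix w assume w: "w \<in> T" "snd w = l t"
    then have "g w \<in> S" "f (g w) = w" using assms(1) by (auto simp: homeomorphism_def)
    moreover from this have "snd (g w) = t" using assms(2,3) w(2) by (metis injD)
    ultimately show "w \<in> f ` {z \<in> S. snd z = t}" by force
  qed
qed

section \<open>Extending a monotone boundary homeomorphism\<close>

locale strip_boundary_homeo =
  fixes S1 S2 :: "(real \<times> real) set" and h h' :: "real \<times> real \<Rightarrow> real \<times> real"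
  assumes strip1: "is_strip S1" and strip2: "is_strip S2"
    and homeo: "homeomorphism (strip_bd S1) (strip_bd S2) h h'"
    and monotone: "monotone_bd (strip_bd S1) h"
begin

abbreviation "u1 \<equiv> strip_lo S1"
abbreviation "v1 \<equiv> strip_hi S1"
abbreviation "u2 \<equiv> strip_lo S2"
abbreviation "v2 \<equiv> strip_hi S2"

lemma bd1_snd: "p \<in> strip_bd S1 \<Longrightarrow> snd p = u1 \<or> snd p = v1"
  and bd2_snd: "q \<in> strip_bd S2 \<Longrightarrow> snd q = u2 \<or> snd q = v2"
  by (simp_all add: strip_bd_eq)

lemma h_in_bd2: "p \<in> strip_bd S1 \<Longrightarrow> h p \<in> strip_bd S2"
  using homeo by (auto simp: homeomorphism_def)

definition \<sigma> :: real where
  "\<sigma> = (if preserves_order (strip_bd S1) h then 1 else -1)"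

lemma \<sigma>_square [simp]: "\<sigma> * \<sigma> = 1"
  by (simp add: \<sigma>_def)

lemma h_bd_less:
  assumes "p \<in> strip_bd S1" "q \<in> strip_bd S1" "bd_less p q"
  shows "snd (h p) = snd (h q) \<and> \<sigma> * fst (h p) < \<sigma> * fst (h q)"
proof (cases "preserves_order (strip_bd S1) h")
  case True
  then have "bd_less (h p) (h q)" using assms unfolding preserves_order_def by blast
  then show ?thesis using True by (simp add: \<sigma>_def bd_less_def)
next
  case False
  then have "bd_less (h q) (h p)"
    using monotone assms unfolding monotone_bd_def reverses_order_def by blast
  then show ?thesis using False by (simp add: \<sigma>_def bd_less_def)
qed

lemma h_incomparable:
  assumes "p \<in> strip_bd S1" "q \<in> strip_bd S1" "snd p \<noteq> snd q"
  shows "\<not> bd_less (h p) (h q)"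
proof -
  have "\<not> bd_less p q" "\<not> bd_less q p" using assms(3) by (auto simp: bd_less_def)
  then show ?thesis using monotone assms(1,2)
    unfolding monotone_bd_def preserves_order_def reverses_order_def by blast
qed

lemma snd_h_eq_iff:
  assumes p: "p \<in> strip_bd S1" and q: "q \<in> strip_bd S1"
  shows "snd (h p) = snd (h q) \<longleftrightarrow> snd p = snd q"
proof
  assume "snd p = snd q"
  then have "p = q \<or> bd_less p q \<or> bd_less q p"
    unfolding bd_less_def by (metis linorder_neqE_linordered_idom prod_eq_iff)
  then show "snd (h p) = snd (h q)" using h_bd_less[OF p q] h_bd_less[OF q p] by metis
next
  assume eq: "snd (h p) = snd (h q)"
  show "snd p = snd q"
  proof (rule ccontr)
    assume ne: "snd p \<noteq> snd q"
    then have "h p \<noteq> h q" using homeo p q by (metis homeomorphism_apply1)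
    then have "bd_less (h p) (h q) \<or> bd_less (h q) (h p)"
      using eq unfolding bd_less_def by (metis linorder_neqE_linordered_idom prod_eq_iff)
    then show False using h_incomparable[OF p q ne] h_incomparable[OF q p] ne by metis
  qed
qed

lemma u1_less_v1: "u1 < v1" and u2_less_v2: "u2 < v2"
  using is_strip_bounds(1) strip1 strip2 by blast+

definition crossed :: bool where
  "crossed \<longleftrightarrow> (\<exists>p\<in>strip_bd S1. (snd p = u1) \<noteq> (snd (h p) = u2))"

lemma snd_h_eq_u2_iff:
  assumes p: "p \<in> strip_bd S1"
  shows "snd (h p) = u2 \<longleftrightarrow> (snd p = u1) \<noteq> crossed"
proof (cases crossed)
  case True
  then obtain q where q: "q \<in> strip_bd S1" "(snd q = u1) \<noteq> (snd (h q) = u2)"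
    unfolding crossed_def by blast
  have "snd p = snd q \<longleftrightarrow> (snd p = u1 \<longleftrightarrow> snd q = u1)"
    using bd1_snd[OF p] bd1_snd[OF q(1)] u1_less_v1 by auto
  moreover have "snd (h p) = snd (h q) \<longleftrightarrow> (snd (h p) = u2 \<longleftrightarrow> snd (h q) = u2)"
    using bd2_snd[OF h_in_bd2[OF p]] bd2_snd[OF h_in_bd2[OF q(1)]] u2_less_v2 by auto
  ultimately show ?thesis using snd_h_eq_iff[OF p q(1)] q(2) True by blast
qed (use p in \<open>auto simp: crossed_def\<close>)

definition h_lo :: real where "h_lo = (if crossed then v2 else u2)"
definition h_hi :: real where "h_hi = (if crossed then u2 else v2)"

lemma snd_h: "p \<in> strip_bd S1 \<Longrightarrow> snd (h p) = (if snd p = u1 then h_lo else h_hi)"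
  using snd_h_eq_u2_iff[of p] bd2_snd[OF h_in_bd2, of p] u2_less_v2
  by (auto simp: h_lo_def h_hi_def)

abbreviation slice :: "real \<Rightarrow> real set" where
  "slice y \<equiv> {a. (a, y) \<in> S1}"

definition \<gamma> :: "real \<Rightarrow> real \<Rightarrow> real" where
  "\<gamma> y a = \<sigma> * fst (h (a, y))"

lemma strict_mono_\<gamma>:
  assumes "y = u1 \<or> y = v1"
  shows "strict_mono_on (slice y) (\<gamma> y)"
proof (rule strict_mono_onI)
  fix a b assume "a \<in> slice y" "b \<in> slice y" "a < b"
  then have "(a, y) \<in> strip_bd S1" "(b, y) \<in> strip_bd S1" "bd_less (a, y) (b, y)"
    using assms by (auto simp: strip_bd_eq bd_less_def)
  then show "\<gamma> y a < \<gamma> y b" using h_bd_less by (simp add: \<gamma>_def)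
qed

lemma continuous_on_\<gamma>:
  assumes "y = u1 \<or> y = v1"
  shows "continuous_on (slice y) (\<gamma> y)"
proof -
  have "continuous_on (slice y) (\<lambda>a. h (a, y))"
    by (rule continuous_on_compose2[OF homeomorphism_cont1[OF homeo]])
      (use assms in \<open>auto intro: continuous_intros simp: strip_bd_eq\<close>)
  then show ?thesis unfolding \<gamma>_def by (intro continuous_intros)
qed

definition A :: "real \<Rightarrow> real \<Rightarrow> real" where
  "A y = graph_arc (slice y) (\<gamma> y)"

lemma mono_A: "y = u1 \<or> y = v1 \<Longrightarrow> mono (A y)"
  and mono_A_compl: "y = u1 \<or> y = v1 \<Longrightarrow> mono (\<lambda>p. p - A y p)"
  unfolding A_def using strict_mono_\<gamma> by (auto intro: mono_graph_arc mono_graph_arc_compl)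

definition X :: "real \<Rightarrow> real \<Rightarrow> real" where
  "X p s = blend (A u1) (A v1) p s"

definition Y :: "real \<Rightarrow> real \<Rightarrow> real" where
  "Y p s = p - X p s"

lemma Y_eq_blend: "Y p s = blend (\<lambda>p. p - A u1 p) (\<lambda>p. p - A v1 p) p s"
  unfolding Y_def X_def by (rule blend_compl)

lemma continuous_on_X: "continuous_on UNIV (\<lambda>z. X (fst z) (snd z))"
  unfolding X_def
  by (intro continuous_on_blend continuous_on_if_mono_compl mono_A mono_A_compl) simp_all

lemma continuous_on_Y: "continuous_on UNIV (\<lambda>z. Y (fst z) (snd z))"
  unfolding Y_eq_blend
  by (intro continuous_on_blend continuous_on_if_mono_compl mono_A mono_A_compl)
    (simp_all add: mono_A)

lemma X_expanding: "0 \<le> s \<Longrightarrow> s \<le> 1 \<Longrightarrow> p \<le> q \<Longrightarrow> s * (1 - s) * (q - p) \<le> X q s - X p s"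
  unfolding X_def by (intro blend_growth mono_A) simp_all

lemma Y_expanding: "0 \<le> s \<Longrightarrow> s \<le> 1 \<Longrightarrow> p \<le> q \<Longrightarrow> s * (1 - s) * (q - p) \<le> Y q s - Y p s"
  unfolding Y_eq_blend by (intro blend_growth mono_A_compl) simp_all

lemma mono_X: "0 \<le> s \<Longrightarrow> s \<le> 1 \<Longrightarrow> mono (\<lambda>p. X p s)"
  unfolding X_def by (intro mono_blend mono_A) simp_all

lemma mono_Y: "0 \<le> s \<Longrightarrow> s \<le> 1 \<Longrightarrow> mono (\<lambda>p. Y p s)"
  unfolding Y_eq_blend by (intro mono_blend mono_A_compl) simp_all

definition rel_height :: "real \<Rightarrow> real" where
  "rel_height y = (y - u1) / (v1 - u1)"

lemma rel_height_u1 [simp]: "rel_height u1 = 0" and rel_height_v1 [simp]: "rel_height v1 = 1"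
  using u1_less_v1 by (simp_all add: rel_height_def)

lemma X_at_boundary_height: "y = u1 \<or> y = v1 \<Longrightarrow> X p (rel_height y) = A y p"
  by (auto simp: X_def)

definition bd_coords :: "real \<times> real \<Rightarrow> real \<times> real" where
  "bd_coords z = (fst z + \<gamma> (snd z) (fst z), rel_height (snd z))"

lemma X_bd_coords: "z \<in> strip_bd S1 \<Longrightarrow> X (fst (bd_coords z)) (snd (bd_coords z)) = fst z"
  and Y_bd_coords: "z \<in> strip_bd S1 \<Longrightarrow> Y (fst (bd_coords z)) (snd (bd_coords z)) = \<gamma> (snd z) (fst z)"
  using graph_arc_at[OF strict_mono_\<gamma>, of "snd z" "fst z"] bd1_snd[of z]
  by (auto simp: bd_coords_def Y_def X_at_boundary_height A_def strip_bd_eq)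

text \<open>On the boundary the point \<open>(a, y)\<close> of \<open>S1\<close> is
  encoded by \<open>p = a + \<gamma> y a\<close>, from which \<open>X\<close> recovers \<open>a\<close> and \<open>Y\<close> recovers \<open>\<gamma> y a\<close>.\<close>

definition D :: "(real \<times> real) set" where
  "D = {z. 0 < snd z \<and> snd z < 1} \<union> bd_coords ` strip_bd S1"

lemma D_snd: "z \<in> D \<Longrightarrow> 0 \<le> snd z \<and> snd z \<le> 1"
  by (auto simp: D_def bd_coords_def strip_bd_eq)

lemma ex1_X: "0 < s \<Longrightarrow> s < 1 \<Longrightarrow> \<exists>!p. X p s = a"
  using continuous_on_compose2[OF continuous_on_X
      continuous_on_Pair[OF continuous_on_id continuous_on_const]]
  by (intro ex1_preimage_if_expanding[where c = "s * (1 - s)"] X_expanding) auto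

lemma ex1_Y: "0 < s \<Longrightarrow> s < 1 \<Longrightarrow> \<exists>!p. Y p s = a"
  using continuous_on_compose2[OF continuous_on_Y
      continuous_on_Pair[OF continuous_on_id continuous_on_const]]
  by (intro ex1_preimage_if_expanding[where c = "s * (1 - s)"] Y_expanding) auto

lemma X_inj_on_D:
  assumes "(p, s) \<in> D" "X q s = X p s"
  shows "q = p"
  using assms unfolding D_def
proof (elim UnE)
  assume "(p, s) \<in> {z. 0 < snd z \<and> snd z < 1}"
  then show "q = p" using ex1_X[of s "X p s"] assms(2) by auto
next
  assume "(p, s) \<in> bd_coords ` strip_bd S1"
  then obtain a y where ay: "(a, y) \<in> strip_bd S1" "(p, s) = bd_coords (a, y)" by auto
  then have "y = u1 \<or> y = v1" "a \<in> slice y" by (auto simp: strip_bd_eq)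
  moreover have "A y q = a"
    using X_bd_coords[OF ay(1)] ay(2) assms(2) X_at_boundary_height[OF \<open>y = u1 \<or> y = v1\<close>]
    by (simp add: bd_coords_def)
  ultimately show "q = p"
    using graph_arc_eq_imp[OF strict_mono_\<gamma> open_strip_slice[OF strip1] continuous_on_\<gamma>] ay(2)
    by (simp add: A_def bd_coords_def)
qed

lemma Y_inj_on_D:
  assumes "(p, s) \<in> D" "Y q s = Y p s"
  shows "q = p"
  using assms unfolding D_def
proof (elim UnE)
  assume "(p, s) \<in> {z. 0 < snd z \<and> snd z < 1}"
  then show "q = p" using ex1_Y[of s "Y p s"] assms(2) by auto
next
  assume "(p, s) \<in> bd_coords ` strip_bd S1"
  then obtain a y where ay: "(a, y) \<in> strip_bd S1" "(p, s) = bd_coords (a, y)" by auto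
  then have "y = u1 \<or> y = v1" "a \<in> slice y" by (auto simp: strip_bd_eq)
  moreover have "q - A y q = \<gamma> y a"
    using Y_bd_coords[OF ay(1)] ay(2) assms(2) X_at_boundary_height[OF \<open>y = u1 \<or> y = v1\<close>]
    by (simp add: bd_coords_def Y_def)
  ultimately show "q = p"
    using graph_arc_compl_eq_imp[OF strict_mono_\<gamma> open_strip_slice[OF strip1]] ay(2)
    by (simp add: A_def bd_coords_def)
qed

definition param1 :: "real \<times> real \<Rightarrow> real \<times> real" where
  "param1 z = (X (fst z) (snd z), u1 + (v1 - u1) * snd z)"

definition param2 :: "real \<times> real \<Rightarrow> real \<times> real" where
  "param2 z = (\<sigma> * Y (fst z) (snd z), h_lo + (h_hi - h_lo) * snd z)"

lemma param1_bd_coords: "z \<in> strip_bd S1 \<Longrightarrow> param1 (bd_coords z) = z"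
  using X_bd_coords bd1_snd[of z] u1_less_v1 by (auto simp: param1_def bd_coords_def prod_eq_iff)

lemma param2_bd_coords: "z \<in> strip_bd S1 \<Longrightarrow> param2 (bd_coords z) = h z"
  using Y_bd_coords snd_h[of z] bd1_snd[of z]
  by (auto simp: param2_def bd_coords_def \<gamma>_def prod_eq_iff mult.assoc[symmetric])

lemma between_h_lo_h_hi:
  assumes "0 < s" "s < 1"
  shows "u2 < h_lo + (h_hi - h_lo) * s \<and> h_lo + (h_hi - h_lo) * s < v2"
proof -
  have "0 < (v2 - u2) * s" "(v2 - u2) * s < v2 - u2" using assms u2_less_v2 by simp_all
  then show ?thesis by (auto simp: h_lo_def h_hi_def algebra_simps)
qed

lemma image_param1: "param1 ` D = S1"
proof
  show "param1 ` D \<subseteq> S1"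
  proof (rule image_subsetI)
    fix z assume "z \<in> D"
    then consider "0 < snd z" "snd z < 1" | w where "w \<in> strip_bd S1" "z = bd_coords w"
      unfolding D_def by blast
    then show "param1 z \<in> S1"
    proof cases
      case 1
      then have "0 < (v1 - u1) * snd z" "(v1 - u1) * snd z < v1 - u1"
        using u1_less_v1 by simp_all
      then show ?thesis using is_strip_bounds(2)[OF strip1] by (auto simp: param1_def)
    qed (auto simp: param1_bd_coords strip_bd_eq)
  qed
  show "S1 \<subseteq> param1 ` D"
  proof
    fix w assume w: "w \<in> S1"
    show "w \<in> param1 ` D"
    proof (cases "snd w = u1 \<or> snd w = v1")
      case True
      then have "w \<in> strip_bd S1" using w by (simp add: strip_bd_eq)
      then have "w = param1 (bd_coords w)" "bd_coords w \<in> D"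
        by (simp_all add: param1_bd_coords D_def)
      then show ?thesis by (rule image_eqI)
    next
      case False
      then have "u1 < snd w" "snd w < v1" using w is_strip_bounds(3)[OF strip1] by force+
      then have s: "0 < rel_height (snd w)" "rel_height (snd w) < 1"
        by (simp_all add: rel_height_def)
      then obtain p where "X p (rel_height (snd w)) = fst w" using ex1_X by blast
      then have "param1 (p, rel_height (snd w)) = w"
        using u1_less_v1 by (simp add: param1_def rel_height_def prod_eq_iff)
      moreover have "(p, rel_height (snd w)) \<in> D" using s by (simp add: D_def)
      ultimately show ?thesis by (metis image_eqI)
    qed
  qed
qed

lemma image_param2: "param2 ` D = S2"
proof
  show "param2 ` D \<subseteq> S2"
  proof (rule image_subsetI)
    fix z assume "z \<in> D"
    then consider "0 < snd z" "snd z < 1" | w where "w \<in> strip_bd S1" "z = bd_coords w"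
      unfolding D_def by blast
    then show "param2 z \<in> S2"
    proof cases
      case 1
      then show ?thesis
        using between_h_lo_h_hi is_strip_bounds(2)[OF strip2] by (auto simp: param2_def)
    next
      case 2
      then show ?thesis using param2_bd_coords h_in_bd2 by (simp add: strip_bd_eq)
    qed
  qed
  show "S2 \<subseteq> param2 ` D"
  proof
    fix w assume w: "w \<in> S2"
    show "w \<in> param2 ` D"
    proof (cases "snd w = u2 \<or> snd w = v2")
      case True
      then have "w \<in> h ` strip_bd S1"
        using w homeomorphism_image1[OF homeo] by (simp add: strip_bd_eq)
      then obtain z where z: "z \<in> strip_bd S1" "w = h z" by blast
      then have "w = param2 (bd_coords z)" "bd_coords z \<in> D"
        by (simp_all add: param2_bd_coords D_def)
      then show ?thesis by (rule image_eqI)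
    next
      case False
      then have "u2 < snd w" "snd w < v2" using w is_strip_bounds(3)[OF strip2] by force+
      define s where "s = (snd w - h_lo) / (h_hi - h_lo)"
      have s: "0 < s" "s < 1" "h_lo + (h_hi - h_lo) * s = snd w"
        using \<open>u2 < snd w\<close> \<open>snd w < v2\<close> by (auto simp: s_def h_lo_def h_hi_def field_simps)
      then obtain p where "Y p s = \<sigma> * fst w" using ex1_Y by blast
      then have "param2 (p, s) = w"
        using s(3) by (simp add: param2_def prod_eq_iff mult.assoc[symmetric])
      moreover have "(p, s) \<in> D" using s by (simp add: D_def)
      ultimately show ?thesis by (metis image_eqI)
    qed
  qed
qed

lemma homeomorphism_param1: obtains g where "homeomorphism D S1 param1 g"
proof -
  have mono: "mono (\<lambda>p. X p s)" if "s \<in> snd ` D" for s using that D_snd mono_X by force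
  have "v1 - u1 \<noteq> 0" using u1_less_v1 by simp
  then obtain g where "homeomorphism D ((\<lambda>z. (1 * X (fst z) (snd z), u1 + (v1 - u1) * snd z)) ` D)
      (\<lambda>z. (1 * X (fst z) (snd z), u1 + (v1 - u1) * snd z)) g"
    by (rule homeomorphism_fibrewise[where c = 1 and e = u1,
          OF one_neq_zero _ continuous_on_X mono X_inj_on_D])
  then show thesis using image_param1 by (intro that) (simp add: param1_def[abs_def])
qed

lemma homeomorphism_param2: obtains g where "homeomorphism D S2 param2 g"
proof -
  have mono: "mono (\<lambda>p. Y p s)" if "s \<in> snd ` D" for s using that D_snd mono_Y by force
  have "\<sigma> \<noteq> 0" "h_hi - h_lo \<noteq> 0" using u2_less_v2 by (auto simp: \<sigma>_def h_lo_def h_hi_def)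
  then obtain g
    where "homeomorphism D ((\<lambda>z. (\<sigma> * Y (fst z) (snd z), h_lo + (h_hi - h_lo) * snd z)) ` D)
      (\<lambda>z. (\<sigma> * Y (fst z) (snd z), h_lo + (h_hi - h_lo) * snd z)) g"
    by (rule homeomorphism_fibrewise[OF _ _ continuous_on_Y mono Y_inj_on_D])
  then show thesis using image_param2 by (intro that) (simp add: param2_def[abs_def])
qed

lemma inverse_param1_bd:
  assumes "homeomorphism D S1 param1 g" "p \<in> strip_bd S1"
  shows "g p = bd_coords p"
  using homeomorphism_apply1[OF assms(1), of "bd_coords p"] param1_bd_coords[OF assms(2)] assms(2)
  by (auto simp: D_def)

lemma snd_inverse_param1:
  assumes "homeomorphism D S1 param1 g" "z \<in> S1"
  shows "snd (g z) = rel_height (snd z)"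
proof -
  have "snd z = u1 + (v1 - u1) * snd (g z)"
    using homeomorphism_apply2[OF assms] by (metis param1_def snd_conv)
  then show ?thesis using u1_less_v1 by (simp add: rel_height_def)
qed

lemma strip_extension:
  obtains f g where "homeomorphism S1 S2 f g" "\<forall>p\<in>strip_bd S1. f p = h p"
    "\<And>t. u1 < t \<Longrightarrow> t < v1 \<Longrightarrow> \<exists>t'. u2 < t' \<and> t' < v2 \<and> f ` (UNIV \<times> {t}) = UNIV \<times> {t'}"
proof -
  obtain g1 where g1: "homeomorphism D S1 param1 g1" by (rule homeomorphism_param1)
  obtain g2 where g2: "homeomorphism D S2 param2 g2" by (rule homeomorphism_param2)
  let ?f = "param2 \<circ> g1"
  have f: "homeomorphism S1 S2 ?f (param1 \<circ> g2)"
    using homeomorphism_compose[OF homeomorphism_symD[OF g1] g2] .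
  have bd: "\<forall>p\<in>strip_bd S1. ?f p = h p"
    by (simp add: inverse_param1_bd[OF g1] param2_bd_coords)
  define L where "L y = h_lo + (h_hi - h_lo) * rel_height y" for y
  have "snd (?f z) = L (snd z)" if "z \<in> S1" for z
    using snd_inverse_param1[OF g1 that] by (simp add: param2_def L_def)
  moreover have "inj L"
    using u1_less_v1 u2_less_v2
    by (auto intro!: injI simp: L_def rel_height_def h_lo_def h_hi_def split: if_splits)
  ultimately have level: "?f ` {z \<in> S1. snd z = t} = {w \<in> S2. snd w = L t}" for t
    by (rule homeomorphism_image_level[OF f])
  have lines: "\<exists>t'. u2 < t' \<and> t' < v2 \<and> ?f ` (UNIV \<times> {t}) = UNIV \<times> {t'}" if "u1 < t" "t < v1" for t
  proof (intro exI conjI)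
    have "0 < rel_height t" "rel_height t < 1" using that by (simp_all add: rel_height_def)
    then show "u2 < L t" "L t < v2" using between_h_lo_h_hi by (simp_all add: L_def)
    then have "{w \<in> S2. snd w = L t} = UNIV \<times> {L t}"
      using is_strip_bounds(2)[OF strip2] by auto
    moreover have "{z \<in> S1. snd z = t} = UNIV \<times> {t}"
      using is_strip_bounds(2)[OF strip1] that by auto
    ultimately show "?f ` (UNIV \<times> {t}) = UNIV \<times> {L t}" using level[of t] by simp
  qed
  show thesis using f bd lines by (rule that)
qed

end

theorem mainTheorem2:
  fixes S1 S2 :: "(real \<times> real) set" and h h' :: "real \<times> real \<Rightarrow> real \<times> real"
  assumes "is_strip S1" and "is_strip S2"
    and "homeomorphism (strip_bd S1) (strip_bd S2) h h'"
    and "monotone_bd (strip_bd S1) h"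
  shows "\<exists>f g. homeomorphism S1 S2 f g \<and> foliated S1 S2 f \<and> (\<forall>p\<in>strip_bd S1. f p = h p)"
proof -
  interpret strip_boundary_homeo S1 S2 h h'
    using assms by unfold_locales
  show ?thesis
  proof (rule strip_extension)
    fix f g
    assume "homeomorphism S1 S2 f g" "\<forall>p\<in>strip_bd S1. f p = h p"
      "\<And>t. u1 < t \<Longrightarrow> t < v1 \<Longrightarrow> \<exists>t'. u2 < t' \<and> t' < v2 \<and> f ` (UNIV \<times> {t}) = UNIV \<times> {t'}"
    then show ?thesis using foliated_if_lines_to_lines[OF assms(3)] by blast
  qed
qed

end
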